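(* Let $R$ be a monad on Sets, $LM$ a left $R$-module with values in Sets, and let $(C,\widetilde C)$ be subsets of $Ob(CC(R,LM))$ and $\widetilde{Ob}(CC(R,LM))$ satisfying conditions (1.1)–(1.6) below (equivalently, corresponding to a C-subsystem of $CC(R,LM)$). Then the assignment $(Ceq,\widetilde{Ceq})\mapsto(\sim,\simeq)$ described below is a bijection from the set of pairs of subsets $(Ceq,\widetilde{Ceq})$ which together with $(C,\widetilde C)$ satisfy conditions (1.1)–(7b) below, onto the set of pairs $(\sim,\simeq)$ of equivalence relations on $C$ and $\widetilde C$ such that: (i) $(\sim,\simeq)$ satisfies the regular congruence conditions (a)–(f) below; (ii) if $\Gamma\in C$, $F\in C$ and $ft(\Gamma)\sim F$, then $\Gamma\sim\sigma(\Gamma,F)$; (iii) if $\mathcal J\in\widetilde C$, $F\in C$ and $\partial(\mathcal J)\sim F$, then $\mathcal J\simeq\widetilde\sigma(\mathcal J,F)$. The inverse sends $(\sim,\simeq)$ to $Ceq=\{(\Gamma,T,T'):(\Gamma,T),(\Gamma,T')\in C,\ (\Gamma,T)\sim(\Gamma,T')\}$ and $\widetilde{Ceq}=\{(\Gamma,T,o,o'):(\Gamma,T,o),(\Gamma,T,o')\in\widetilde C,\ (\Gamma,T,o)\simeq(\Gamma,T,o')\}$. Conditions (for all well-formed data, $n=l(\Gamma)$, $i=l(\Gamma_1)$): (1.1) $(\rhd)$; (1.2) $(\Gamma,T\rhd)\Rightarrow(\Gamma\rhd)$; (1.3) $(\Gamma\vdash r:R)\Rightarrow(\Gamma,R\rhd)$;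 (1.4) $(\Gamma,T\rhd)\wedge(\Gamma,\Delta\vdash r:R)\Rightarrow(\Gamma,T,t_{n+1}\Delta\vdash t_{n+1}r:t_{n+1}R)$; (1.5) $(\Gamma\vdash s:S)\wedge(\Gamma,S,\Delta\vdash r:R)\Rightarrow(\Gamma,s_{n+1}(\Delta[s/n+1])\vdash s_{n+1}(r[s/n+1]):s_{n+1}(R[s/n+1]))$; (1.6) $(\Gamma,T\rhd)\Rightarrow(\Gamma,T\vdash n+1:t_{n+1}T)$; (2a) $(\Gamma\vdash T=T')\Rightarrow(\Gamma,T\rhd)$; (2b) $(\Gamma,T\rhd)\Rightarrow(\Gamma\vdash T=T)$; (2c) $(\Gamma\vdash T=T')\Rightarrow(\Gamma\vdash T'=T)$; (2d) $(\Gamma\vdash T=T')\wedge(\Gamma\vdash T'=T'')\Rightarrow(\Gamma\vdash T=T'')$; (3a) $(\Gamma\vdash o=o':T)\Rightarrow(\Gamma\vdash o:T)$; (3b) $(\Gamma\vdash o:T)\Rightarrow(\Gamma\vdash o=o:T)$; (3c) $(\Gamma\vdash o=o':T)\Rightarrow(\Gamma\vdash o'=o:T)$; (3d) $(\Gamma\vdash o=o':T)\wedge(\Gamma\vdash o'=o'':T)\Rightarrow(\Gamma\vdash o=o'':T)$; (4a) $(\Gamma_1\vdash T=T')\wedge(\Gamma_1,T,\Gamma_2\vdash S=S')\Rightarrow(\Gamma_1,T',\Gamma_2\vdash S=S')$; (4b) $(\Gamma_1\vdash T=T')\wedge(\Gamma_1,T,\Gamma_2\vdash o=o':S)\Rightarrow(\Gamma_1,T',\Gamma_2\vdash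 o=o':S)$; (4c) $(\Gamma\vdash S=S')\wedge(\Gamma\vdash o=o':S)\Rightarrow(\Gamma\vdash o=o':S')$; (5a) $(\Gamma_1,T\rhd)\wedge(\Gamma_1,\Gamma_2\vdash S=S')\Rightarrow(\Gamma_1,T,t_{i+1}\Gamma_2\vdash t_{i+1}S=t_{i+1}S')$; (5b) $(\Gamma_1,T\rhd)\wedge(\Gamma_1,\Gamma_2\vdash o=o':S)\Rightarrow(\Gamma_1,T,t_{i+1}\Gamma_2\vdash t_{i+1}o=t_{i+1}o':t_{i+1}S)$; (6a) $(\Gamma_1,T,\Gamma_2\vdash S=S')\wedge(\Gamma_1\vdash r:T)\Rightarrow(\Gamma_1,s_{i+1}(\Gamma_2[r/i+1])\vdash s_{i+1}(S[r/i+1])=s_{i+1}(S'[r/i+1]))$; (6b) $(\Gamma_1,T,\Gamma_2\vdash o=o':S)\wedge(\Gamma_1\vdash r:T)\Rightarrow(\Gamma_1,s_{i+1}(\Gamma_2[r/i+1])\vdash s_{i+1}(o[r/i+1])=s_{i+1}(o'[r/i+1]):s_{i+1}(S[r/i+1]))$; (7a) $(\Gamma_1,T,\Gamma_2,S\rhd)\wedge(\Gamma_1\vdash r=r':T)\Rightarrow(\Gamma_1,s_{i+1}(\Gamma_2[r/i+1])\vdash s_{i+1}(S[r/i+1])=s_{i+1}(S[r'/i+1]))$; (7b) $(\Gamma_1,T,\Gamma_2\vdash o:S)\wedge(\Gamma_1\vdash r=r':T)\Rightarrow(\Gamma_1,s_{i+1}(\Gamma_2[r/i+1])\vdash s_{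i+1}(o[r/i+1])=s_{i+1}(o[r'/i+1]):s_{i+1}(S[r/i+1]))$.
   Context: $[n]=\{1,\dots,n\}$. $R$ is a monad on Sets (unit $\eta$, Kleisli extension $\mathrm{bind}$), $LM$ a left $R$-module with action $\rho(f):LM(X)\to LM(Y)$ for $f:X\to R(Y)$. Elements of $Y$ are regarded in $R(Y)$ via $\eta_Y$; $E(f_1/1,\dots,f_m/m)$ is $\rho(f)(E)$ or $\mathrm{bind}(f)(E)$ with $f(i)=f_i$. For $E$ in $LM([m])$ or $R([m])$, $m\ge n$: $t_{n+1}E:=E(1/1,\dots,n/n,n+2/n+1,\dots,m+1/m)$; for $m\ge n+1$, $s\in R([n])$: $s_{n+1}(E[s/n+1]):=E(1/1,\dots,n/n,s/n+1,n+1/n+2,\dots,m-1/m)$; both applied componentwise to sequences. $Ob(CC(R,LM))$: sequences $\Gamma=(T_1,\dots,T_n)$, $T_j\in LM([j-1])$, $l(\Gamma)=n$, $ft$ drops the last entry; commas concatenate. $\widetilde{Ob}(CC(R,LM))$: elements $(\Gamma\vdash t:T)=(T_1,\dots,T_n,T,t)$ with $T\in LM([n])$, $t\in R([n])$; $\partial(\Gamma\vdash t:T)=(\Gamma,T)$. $Ceq\subset\coprod_n(\prod_{j<n}LM([j]))\times LM([n])^2$, $\widetilde{Ceq}\subset\coprod_n(\prod_{j\le n}LM([j]))\times R([n])^2$. Notation: $(\Gamma\rhd)$: $\Gamma\in C$; $(\Gamma\vdash t:T)$ as a judgement: $(\Gamma,T,t)\in\widetilde C$; $(\Gamma\vdash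 S=S')$: $(\Gamma,S,S')\in Ceq$; $(\Gamma\vdash o=o':S)$: $(\Gamma,S,o,o')\in\widetilde{Ceq}$. The assignment $(Ceq,\widetilde{Ceq})\mapsto(\sim,\simeq)$: $(T_1,\dots,T_n)\sim(T'_1,\dots,T'_n)$ (elements of $C$) iff $n=0$ or ($ft$'s are $\sim$-related and $(T_1,\dots,T_{n-1}\vdash T_n=T'_n)$); different lengths never related; $(\Gamma\vdash o:S)\simeq(\Gamma'\vdash o':S')$ iff $(\Gamma,S)\sim(\Gamma',S')$ and $(\Gamma\vdash o=o':S)$. $\sigma((T_1,\dots,T_{n+k}),(T'_1,\dots,T'_n))=(T'_1,\dots,T'_n,T_{n+1},\dots,T_{n+k})$ for $k>0$. For $\mathcal J=(T_1,\dots,T_{n+k-1}\vdash t:T_{n+k})$, $\Gamma'=(T'_1,\dots,T'_n)$, $n\ge1,k\ge0$: $\widetilde\sigma(\mathcal J,\Gamma')=(T'_1,\dots,T'_n,T_{n+1},\dots,T_{n+k-1}\vdash t:T_{n+k})$ if $k>0$, $(T'_1,\dots,T'_{n-1}\vdash t:T'_n)$ if $k=0$. Operations (with $n=l(\Gamma)$): $T((\Gamma,T),(\Gamma,\Delta))=(\Gamma,T,t_{n+1}\Delta)$; $\widetilde T((\Gamma,T),(\Gamma,\Delta\vdash r:R))=(\Gamma,T,t_{n+1}\Delta\vdash t_{n+1}r:t_{n+1}R)$; $S((\Gamma\vdash s:S),(\Gamma,S,\Delta))=(\Gamma,s_{n+1}(\Delta[s/n+1]))$; $\widetilde S((\Gamma\vdash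 s:S),(\Gamma,S,\Delta\vdash r:R))=(\Gamma,s_{n+1}(\Delta[s/n+1])\vdash s_{n+1}(r[s/n+1]):s_{n+1}(R[s/n+1]))$; $\delta(\Gamma,T)=(\Gamma,T\vdash n+1:t_{n+1}T)$. Regular congruence conditions on $(\sim,\simeq)$: (a) both are equivalence relations; (b) $\Gamma\sim\Gamma'\Rightarrow l(\Gamma)=l(\Gamma')$ and $ft(\Gamma)\sim ft(\Gamma')$; (c) $\mathcal J\simeq\mathcal J'\Rightarrow\partial\mathcal J\sim\partial\mathcal J'$; (d) if $(\Gamma,T)\in C$, $\Gamma'\in C$, $\Gamma\sim\Gamma'$, there is $(\Gamma',T')\in C$ with $(\Gamma,T)\sim(\Gamma',T')$; (e) if $\mathcal J\in\widetilde C$, $F\in C$, $\partial\mathcal J\sim F$, there is $\mathcal J'\in\widetilde C$ with $\partial\mathcal J'=F$ and $\mathcal J\simeq\mathcal J'$; (f) compatibility with $T,\widetilde T,S,\widetilde S,\delta$: related arguments in $C/\widetilde C$ for which both applications are defined give related results. *)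

theory Defs
  imports Main
begin

text \<open>
  A monad R on Sets together with a left R-module LM is represented by its
  restriction to the finite sets [n] = {1..n} (the only sets used in CC(R,LM)):
  carriers Rs n = R([n]), LMs n = LM([n]) (as subsets of fixed HOL types),
  unit eta n i = eta_[n](i) for i in [n], Kleisli extension
  bnd m k f : R([m]) -> R([k]) for f : [m] -> R([k]) (f only matters on [m]),
  and module action act m k f : LM([m]) -> LM([k]).
\<close>

record ('r, 'l) mdata =
  Rs  :: "nat \<Rightarrow> 'r set"
  eta :: "nat \<Rightarrow> nat \<Rightarrow> 'r"
  bnd :: "nat \<Rightarrow> nat \<Rightarrow> (nat \<Rightarrow> 'r) \<Rightarrow> 'r \<Rightarrow> 'r"
  LMs :: "nat \<Rightarrow> 'l set"
  act :: "nat \<Rightarrow> nat \<Rightarrow> (nat \<Rightarrow> 'r) \<Rightarrow> 'l \<Rightarrow> 'l"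

definition kl_map :: "('r, 'l) mdata \<Rightarrow> nat \<Rightarrow> nat \<Rightarrow> (nat \<Rightarrow> 'r) \<Rightarrow> bool" where
  "kl_map M m k f \<longleftrightarrow> (\<forall>i\<in>{1..m}. f i \<in> Rs M k)"

definition monad_module :: "('r, 'l) mdata \<Rightarrow> bool" where
  "monad_module M \<longleftrightarrow>
     \<comment> \<open>monad (Kleisli triple)\<close>
     (\<forall>n i. i \<in> {1..n} \<longrightarrow> eta M n i \<in> Rs M n) \<and>
     (\<forall>m k f x. kl_map M m k f \<longrightarrow> x \<in> Rs M m \<longrightarrow> bnd M m k f x \<in> Rs M k) \<and>
     (\<forall>m k f g x. (\<forall>i\<in>{1..m}. f i = g i) \<longrightarrow> x \<in> Rs M m \<longrightarrow> bnd M m k f x = bnd M m k g x) \<and>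
     (\<forall>m k f i. kl_map M m k f \<longrightarrow> i \<in> {1..m} \<longrightarrow> bnd M m k f (eta M m i) = f i) \<and>
     (\<forall>m x. x \<in> Rs M m \<longrightarrow> bnd M m m (eta M m) x = x) \<and>
     (\<forall>m k l f g x. kl_map M m k f \<longrightarrow> kl_map M k l g \<longrightarrow> x \<in> Rs M m \<longrightarrow>
        bnd M k l g (bnd M m k f x) = bnd M m l (\<lambda>i. bnd M k l g (f i)) x) \<and>
     \<comment> \<open>left module\<close>
     (\<forall>m k f E. kl_map M m k f \<longrightarrow> E \<in> LMs M m \<longrightarrow> act M m k f E \<in> LMs M k) \<and>
     (\<forall>m k f g E. (\<forall>i\<in>{1..m}. f i = g i) \<longrightarrow> E \<in> LMs M m \<longrightarrow> act M m k f E = act M m k g E) \<and>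
     (\<forall>m E. E \<in> LMs M m \<longrightarrow> act M m m (eta M m) E = E) \<and>
     (\<forall>m k l f g E. kl_map M m k f \<longrightarrow> kl_map M k l g \<longrightarrow> E \<in> LMs M m \<longrightarrow>
        act M k l g (act M m k f E) = act M m l (\<lambda>i. bnd M k l g (f i)) E)"

definition wk_fun :: "('r, 'l) mdata \<Rightarrow> nat \<Rightarrow> nat \<Rightarrow> nat \<Rightarrow> 'r" where
  "wk_fun M n m = (\<lambda>i. eta M (Suc m) (if i \<le> n then i else Suc i))"

text \<open>t_{n+1} E for E in LM([m]) resp. R([m]), m >= n; result in LM([m+1]) resp. R([m+1]).\<close>
definition wk_l :: "('r, 'l) mdata \<Rightarrow> nat \<Rightarrow> nat \<Rightarrow> 'l \<Rightarrow> 'l" where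
  "wk_l M n m E = act M m (Suc m) (wk_fun M n m) E"

definition wk_r :: "('r, 'l) mdata \<Rightarrow> nat \<Rightarrow> nat \<Rightarrow> 'r \<Rightarrow> 'r" where
  "wk_r M n m x = bnd M m (Suc m) (wk_fun M n m) x"

text \<open>Componentwise on a sequence Delta extending a context of length n
  (so Delta!j lies in LM([n+j])).\<close>
definition wk_seq :: "('r, 'l) mdata \<Rightarrow> nat \<Rightarrow> 'l list \<Rightarrow> 'l list" where
  "wk_seq M n D = map (\<lambda>j. wk_l M n (n + j) (D ! j)) [0..<length D]"

definition sb_fun :: "('r, 'l) mdata \<Rightarrow> nat \<Rightarrow> nat \<Rightarrow> 'r \<Rightarrow> nat \<Rightarrow> 'r" where
  "sb_fun M n m s = (\<lambda>i. if i \<le> n then eta M (m - 1) i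
                        else if i = Suc n then bnd M n (m - 1) (eta M (m - 1)) s
                        else eta M (m - 1) (i - 1))"

text \<open>s_{n+1}(E[s/n+1]) for E in LM([m]) resp. R([m]), m >= n+1, s in R([n]);
  result in LM([m-1]) resp. R([m-1]) (s is regarded in R([m-1]) via [n] \<subseteq> [m-1]).\<close>
definition sb_l :: "('r, 'l) mdata \<Rightarrow> nat \<Rightarrow> nat \<Rightarrow> 'r \<Rightarrow> 'l \<Rightarrow> 'l" where
  "sb_l M n m s E = act M m (m - 1) (sb_fun M n m s) E"

definition sb_r :: "('r, 'l) mdata \<Rightarrow> nat \<Rightarrow> nat \<Rightarrow> 'r \<Rightarrow> 'r \<Rightarrow> 'r" where
  "sb_r M n m s x = bnd M m (m - 1) (sb_fun M n m s) x"

text \<open>Componentwise on Delta extending a context of length n+1 (Delta!j in LM([n+1+j])).\<close>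
definition sb_seq :: "('r, 'l) mdata \<Rightarrow> nat \<Rightarrow> 'r \<Rightarrow> 'l list \<Rightarrow> 'l list" where
  "sb_seq M n s D = map (\<lambda>j. sb_l M n (Suc n + j) s (D ! j)) [0..<length D]"

text \<open>Contexts (T_1,...,T_n) are lists with T_j in LM([j-1]); a judgement
  (Gamma |- t : T) is the triple (Gamma, T, t).\<close>
definition Ob :: "('r, 'l) mdata \<Rightarrow> 'l list set" where
  "Ob M = {G. \<forall>j<length G. G ! j \<in> LMs M j}"

definition ObT :: "('r, 'l) mdata \<Rightarrow> ('l list \<times> 'l \<times> 'r) set" where
  "ObT M = {(G, T, t). G \<in> Ob M \<and> T \<in> LMs M (length G) \<and> t \<in> Rs M (length G)}"

definition bd :: "'l list \<times> 'l \<times> 'r \<Rightarrow> 'l list" where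
  "bd J = (case J of (G, T, t) \<Rightarrow> G @ [T])"

definition EqAmb :: "('r, 'l) mdata \<Rightarrow> ('l list \<times> 'l \<times> 'l) set" where
  "EqAmb M = {(G, S, S'). G \<in> Ob M \<and> S \<in> LMs M (length G) \<and> S' \<in> LMs M (length G)}"

definition EqtAmb :: "('r, 'l) mdata \<Rightarrow> ('l list \<times> 'l \<times> 'r \<times> 'r) set" where
  "EqtAmb M = {(G, S, o1, o2). G @ [S] \<in> Ob M \<and> o1 \<in> Rs M (length G) \<and> o2 \<in> Rs M (length G)}"

definition conds1 :: "('r, 'l) mdata \<Rightarrow> 'l list set \<Rightarrow> ('l list \<times> 'l \<times> 'r) set \<Rightarrow> bool" where
  "conds1 M C Ct \<longleftrightarrow>
     [] \<in> C \<and>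
     (\<forall>G T. G @ [T] \<in> C \<longrightarrow> G \<in> C) \<and>
     (\<forall>G R r. (G, R, r) \<in> Ct \<longrightarrow> G @ [R] \<in> C) \<and>
     (\<forall>G T D R r. G @ [T] \<in> C \<longrightarrow> (G @ D, R, r) \<in> Ct \<longrightarrow>
        (G @ [T] @ wk_seq M (length G) D, wk_l M (length G) (length G + length D) R,
         wk_r M (length G) (length G + length D) r) \<in> Ct) \<and>
     (\<forall>G S s D R r. (G, S, s) \<in> Ct \<longrightarrow> (G @ [S] @ D, R, r) \<in> Ct \<longrightarrow>
        (G @ sb_seq M (length G) s D, sb_l M (length G) (Suc (length G) + length D) s R,
         sb_r M (length G) (Suc (length G) + length D) s r) \<in> Ct) \<and>
     (\<forall>G T. G @ [T] \<in> C \<longrightarrow>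
        (G @ [T], wk_l M (length G) (length G) T, eta M (Suc (length G)) (Suc (length G))) \<in> Ct)"

definition conds_eq :: "('r, 'l) mdata \<Rightarrow> 'l list set \<Rightarrow> ('l list \<times> 'l \<times> 'r) set
    \<Rightarrow> ('l list \<times> 'l \<times> 'l) set \<Rightarrow> ('l list \<times> 'l \<times> 'r \<times> 'r) set \<Rightarrow> bool" where
  "conds_eq M C Ct Ceq Ceqt \<longleftrightarrow>
     \<comment> \<open>(2a)--(2d)\<close>
     (\<forall>G T T'. (G, T, T') \<in> Ceq \<longrightarrow> G @ [T] \<in> C) \<and>
     (\<forall>G T. G @ [T] \<in> C \<longrightarrow> (G, T, T) \<in> Ceq) \<and>
     (\<forall>G T T'. (G, T, T') \<in> Ceq \<longrightarrow> (G, T', T) \<in> Ceq) \<and>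
     (\<forall>G T T' T''. (G, T, T') \<in> Ceq \<longrightarrow> (G, T', T'') \<in> Ceq \<longrightarrow> (G, T, T'') \<in> Ceq) \<and>
     \<comment> \<open>(3a)--(3d)\<close>
     (\<forall>G T o1 o2. (G, T, o1, o2) \<in> Ceqt \<longrightarrow> (G, T, o1) \<in> Ct) \<and>
     (\<forall>G T o1. (G, T, o1) \<in> Ct \<longrightarrow> (G, T, o1, o1) \<in> Ceqt) \<and>
     (\<forall>G T o1 o2. (G, T, o1, o2) \<in> Ceqt \<longrightarrow> (G, T, o2, o1) \<in> Ceqt) \<and>
     (\<forall>G T o1 o2 o3. (G, T, o1, o2) \<in> Ceqt \<longrightarrow> (G, T, o2, o3) \<in> Ceqt \<longrightarrow> (G, T, o1, o3) \<in> Ceqt) \<and>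
     \<comment> \<open>(4a)--(4c)\<close>
     (\<forall>G1 T T' G2 S S'. (G1, T, T') \<in> Ceq \<longrightarrow> (G1 @ [T] @ G2, S, S') \<in> Ceq \<longrightarrow>
        (G1 @ [T'] @ G2, S, S') \<in> Ceq) \<and>
     (\<forall>G1 T T' G2 S o1 o2. (G1, T, T') \<in> Ceq \<longrightarrow> (G1 @ [T] @ G2, S, o1, o2) \<in> Ceqt \<longrightarrow>
        (G1 @ [T'] @ G2, S, o1, o2) \<in> Ceqt) \<and>
     (\<forall>G S S' o1 o2. (G, S, S') \<in> Ceq \<longrightarrow> (G, S, o1, o2) \<in> Ceqt \<longrightarrow> (G, S', o1, o2) \<in> Ceqt) \<and>
     \<comment> \<open>(5a), (5b)\<close>
     (\<forall>G1 T G2 S S'. G1 @ [T] \<in> C \<longrightarrow> (G1 @ G2, S, S') \<in> Ceq \<longrightarrow>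
        (G1 @ [T] @ wk_seq M (length G1) G2,
         wk_l M (length G1) (length G1 + length G2) S,
         wk_l M (length G1) (length G1 + length G2) S') \<in> Ceq) \<and>
     (\<forall>G1 T G2 S o1 o2. G1 @ [T] \<in> C \<longrightarrow> (G1 @ G2, S, o1, o2) \<in> Ceqt \<longrightarrow>
        (G1 @ [T] @ wk_seq M (length G1) G2,
         wk_l M (length G1) (length G1 + length G2) S,
         wk_r M (length G1) (length G1 + length G2) o1,
         wk_r M (length G1) (length G1 + length G2) o2) \<in> Ceqt) \<and>
     \<comment> \<open>(6a), (6b)\<close>
     (\<forall>G1 T G2 S S' r. (G1 @ [T] @ G2, S, S') \<in> Ceq \<longrightarrow> (G1, T, r) \<in> Ct \<longrightarrow>
        (G1 @ sb_seq M (length G1) r G2,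
         sb_l M (length G1) (Suc (length G1) + length G2) r S,
         sb_l M (length G1) (Suc (length G1) + length G2) r S') \<in> Ceq) \<and>
     (\<forall>G1 T G2 S o1 o2 r. (G1 @ [T] @ G2, S, o1, o2) \<in> Ceqt \<longrightarrow> (G1, T, r) \<in> Ct \<longrightarrow>
        (G1 @ sb_seq M (length G1) r G2,
         sb_l M (length G1) (Suc (length G1) + length G2) r S,
         sb_r M (length G1) (Suc (length G1) + length G2) r o1,
         sb_r M (length G1) (Suc (length G1) + length G2) r o2) \<in> Ceqt) \<and>
     \<comment> \<open>(7a), (7b)\<close>
     (\<forall>G1 T G2 S r r'. G1 @ [T] @ G2 @ [S] \<in> C \<longrightarrow> (G1, T, r, r') \<in> Ceqt \<longrightarrow>
        (G1 @ sb_seq M (length G1) r G2,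
         sb_l M (length G1) (Suc (length G1) + length G2) r S,
         sb_l M (length G1) (Suc (length G1) + length G2) r' S) \<in> Ceq) \<and>
     (\<forall>G1 T G2 S o1 r r'. (G1 @ [T] @ G2, S, o1) \<in> Ct \<longrightarrow> (G1, T, r, r') \<in> Ceqt \<longrightarrow>
        (G1 @ sb_seq M (length G1) r G2,
         sb_l M (length G1) (Suc (length G1) + length G2) r S,
         sb_r M (length G1) (Suc (length G1) + length G2) r o1,
         sb_r M (length G1) (Suc (length G1) + length G2) r' o1) \<in> Ceqt)"

function simr :: "('l list \<times> 'l \<times> 'l) set \<Rightarrow> 'l list \<Rightarrow> 'l list \<Rightarrow> bool" where
  "simr Ceq G G' =
     (if G = [] then G' = []
      else length G = length G' \<and> simr Ceq (butlast G) (butlast G') \<and>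
           (butlast G, last G, last G') \<in> Ceq)"
  by auto
termination by (relation "measure (\<lambda>(_, G, _). length G)") auto

definition sim_of :: "'l list set \<Rightarrow> ('l list \<times> 'l \<times> 'l) set \<Rightarrow> ('l list \<times> 'l list) set" where
  "sim_of C Ceq = {(G, G'). G \<in> C \<and> G' \<in> C \<and> simr Ceq G G'}"

definition simeq_of :: "'l list set \<Rightarrow> ('l list \<times> 'l \<times> 'r) set \<Rightarrow> ('l list \<times> 'l \<times> 'l) set
    \<Rightarrow> ('l list \<times> 'l \<times> 'r \<times> 'r) set \<Rightarrow> (('l list \<times> 'l \<times> 'r) \<times> ('l list \<times> 'l \<times> 'r)) set" where
  "simeq_of C Ct Ceq Ceqt =
     {((G, S, o1), (G', S', o2)). (G, S, o1) \<in> Ct \<and> (G', S', o2) \<in> Ct \<and>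
        (G @ [S], G' @ [S']) \<in> sim_of C Ceq \<and> (G, S, o1, o2) \<in> Ceqt}"

definition assign :: "'l list set \<Rightarrow> ('l list \<times> 'l \<times> 'r) set
    \<Rightarrow> ('l list \<times> 'l \<times> 'l) set \<times> ('l list \<times> 'l \<times> 'r \<times> 'r) set
    \<Rightarrow> ('l list \<times> 'l list) set \<times> (('l list \<times> 'l \<times> 'r) \<times> ('l list \<times> 'l \<times> 'r)) set" where
  "assign C Ct p = (sim_of C (fst p), simeq_of C Ct (fst p) (snd p))"

definition unassign :: "'l list set \<Rightarrow> ('l list \<times> 'l \<times> 'r) set
    \<Rightarrow> ('l list \<times> 'l list) set \<times> (('l list \<times> 'l \<times> 'r) \<times> ('l list \<times> 'l \<times> 'r)) set
    \<Rightarrow> ('l list \<times> 'l \<times> 'l) set \<times> ('l list \<times> 'l \<times> 'r \<times> 'r) set" where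
  "unassign C Ct q =
     ({(G, T, T'). G @ [T] \<in> C \<and> G @ [T'] \<in> C \<and> (G @ [T], G @ [T']) \<in> fst q},
      {(G, T, o1, o2). (G, T, o1) \<in> Ct \<and> (G, T, o2) \<in> Ct \<and> ((G, T, o1), (G, T, o2)) \<in> snd q})"

definition sigma :: "'l list \<Rightarrow> 'l list \<Rightarrow> 'l list" where
  "sigma G F = F @ drop (length F) G"

definition tsigma :: "'l list \<times> 'l \<times> 'r \<Rightarrow> 'l list \<Rightarrow> 'l list \<times> 'l \<times> 'r" where
  "tsigma J F = (case J of (G, T, t) \<Rightarrow>
      if length F \<le> length G then (F @ drop (length F) G, T, t)   \<comment> \<open>k > 0\<close>
      else (butlast F, last F, t))                                \<comment> \<open>k = 0\<close>"

definition regular_congruence :: "('r, 'l) mdata \<Rightarrow> 'l list set \<Rightarrow> ('l list \<times> 'l \<times> 'r) set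
    \<Rightarrow> ('l list \<times> 'l list) set \<Rightarrow> (('l list \<times> 'l \<times> 'r) \<times> ('l list \<times> 'l \<times> 'r)) set \<Rightarrow> bool" where
  "regular_congruence M C Ct sim simeq \<longleftrightarrow>
     \<comment> \<open>(a)\<close>
     equiv C sim \<and> equiv Ct simeq \<and>
     \<comment> \<open>(b)\<close>
     (\<forall>G G'. (G, G') \<in> sim \<longrightarrow> length G = length G' \<and> (butlast G, butlast G') \<in> sim) \<and>
     \<comment> \<open>(c)\<close>
     (\<forall>J J'. (J, J') \<in> simeq \<longrightarrow> (bd J, bd J') \<in> sim) \<and>
     \<comment> \<open>(d)\<close>
     (\<forall>G T G'. G @ [T] \<in> C \<longrightarrow> G' \<in> C \<longrightarrow> (G, G') \<in> sim \<longrightarrow>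
        (\<exists>T'. G' @ [T'] \<in> C \<and> (G @ [T], G' @ [T']) \<in> sim)) \<and>
     \<comment> \<open>(e)\<close>
     (\<forall>J F. J \<in> Ct \<longrightarrow> F \<in> C \<longrightarrow> (bd J, F) \<in> sim \<longrightarrow>
        (\<exists>J'. J' \<in> Ct \<and> bd J' = F \<and> (J, J') \<in> simeq)) \<and>
     \<comment> \<open>(f) compatibility with T\<close>
     (\<forall>G T D G' T' D'. G @ [T] \<in> C \<longrightarrow> G @ D \<in> C \<longrightarrow> G' @ [T'] \<in> C \<longrightarrow> G' @ D' \<in> C \<longrightarrow>
        (G @ [T], G' @ [T']) \<in> sim \<longrightarrow> (G @ D, G' @ D') \<in> sim \<longrightarrow>
        (G @ [T] @ wk_seq M (length G) D, G' @ [T'] @ wk_seq M (length G') D') \<in> sim) \<and>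
     \<comment> \<open>(f) compatibility with ~T\<close>
     (\<forall>G T D R r G' T' D' R' r'. G @ [T] \<in> C \<longrightarrow> (G @ D, R, r) \<in> Ct \<longrightarrow>
        G' @ [T'] \<in> C \<longrightarrow> (G' @ D', R', r') \<in> Ct \<longrightarrow>
        (G @ [T], G' @ [T']) \<in> sim \<longrightarrow> ((G @ D, R, r), (G' @ D', R', r')) \<in> simeq \<longrightarrow>
        ((G @ [T] @ wk_seq M (length G) D, wk_l M (length G) (length G + length D) R,
          wk_r M (length G) (length G + length D) r),
         (G' @ [T'] @ wk_seq M (length G') D', wk_l M (length G') (length G' + length D') R',
          wk_r M (length G') (length G' + length D') r')) \<in> simeq) \<and>
     \<comment> \<open>(f) compatibility with S\<close>
     (\<forall>G S s D G' S' s' D'. (G, S, s) \<in> Ct \<longrightarrow> G @ [S] @ D \<in> C \<longrightarrow>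
        (G', S', s') \<in> Ct \<longrightarrow> G' @ [S'] @ D' \<in> C \<longrightarrow>
        ((G, S, s), (G', S', s')) \<in> simeq \<longrightarrow> (G @ [S] @ D, G' @ [S'] @ D') \<in> sim \<longrightarrow>
        (G @ sb_seq M (length G) s D, G' @ sb_seq M (length G') s' D') \<in> sim) \<and>
     \<comment> \<open>(f) compatibility with ~S\<close>
     (\<forall>G S s D R r G' S' s' D' R' r'. (G, S, s) \<in> Ct \<longrightarrow> (G @ [S] @ D, R, r) \<in> Ct \<longrightarrow>
        (G', S', s') \<in> Ct \<longrightarrow> (G' @ [S'] @ D', R', r') \<in> Ct \<longrightarrow>
        ((G, S, s), (G', S', s')) \<in> simeq \<longrightarrow> ((G @ [S] @ D, R, r), (G' @ [S'] @ D', R', r')) \<in> simeq \<longrightarrow>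
        ((G @ sb_seq M (length G) s D, sb_l M (length G) (Suc (length G) + length D) s R,
          sb_r M (length G) (Suc (length G) + length D) s r),
         (G' @ sb_seq M (length G') s' D', sb_l M (length G') (Suc (length G') + length D') s' R',
          sb_r M (length G') (Suc (length G') + length D') s' r')) \<in> simeq) \<and>
     \<comment> \<open>(f) compatibility with delta\<close>
     (\<forall>G T G' T'. G @ [T] \<in> C \<longrightarrow> G' @ [T'] \<in> C \<longrightarrow> (G @ [T], G' @ [T']) \<in> sim \<longrightarrow>
        ((G @ [T], wk_l M (length G) (length G) T, eta M (Suc (length G)) (Suc (length G))),
         (G' @ [T'], wk_l M (length G') (length G') T', eta M (Suc (length G')) (Suc (length G')))) \<in> simeq)"

definition sigma_conds :: "'l list set \<Rightarrow> ('l list \<times> 'l \<times> 'r) set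
    \<Rightarrow> ('l list \<times> 'l list) set \<Rightarrow> (('l list \<times> 'l \<times> 'r) \<times> ('l list \<times> 'l \<times> 'r)) set \<Rightarrow> bool" where
  "sigma_conds C Ct sim simeq \<longleftrightarrow>
     \<comment> \<open>(ii)\<close>
     (\<forall>G F. G \<in> C \<longrightarrow> G \<noteq> [] \<longrightarrow> F \<in> C \<longrightarrow> (butlast G, F) \<in> sim \<longrightarrow> (G, sigma G F) \<in> sim) \<and>
     \<comment> \<open>(iii)\<close>
     (\<forall>J F. J \<in> Ct \<longrightarrow> F \<in> C \<longrightarrow> (bd J, F) \<in> sim \<longrightarrow> (J, tsigma J F) \<in> simeq)"

end

theory Submission
  imports Defs
begin

text \<open>
  By (ii), the prefix of a context may be replaced by any equivalent one, so
  \<open>(\<Gamma>, T) \<sim> (\<Gamma>', T')\<close> iff \<open>\<Gamma> \<sim> \<Gamma>'\<close> and \<open>(\<Gamma>, T) \<sim> (\<Gamma>, T')\<close>; by (iii), likewise,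
  \<open>(\<Gamma> \<turnstile> o : T) \<simeq> (\<Gamma>' \<turnstile> o' : T')\<close> iff \<open>(\<Gamma>, T) \<sim> (\<Gamma>', T')\<close> and \<open>(\<Gamma> \<turnstile> o : T) \<simeq> (\<Gamma> \<turnstile> o' : T)\<close>.
  Hence \<open>\<sim>\<close> and \<open>\<simeq>\<close> are determined by their restrictions to pairs differing only in the
  last entry, and these restrictions are precisely \<open>Ceq\<close> and \<open>~Ceq\<close>. Conversely, the relations
  built from \<open>Ceq\<close> and \<open>~Ceq\<close> are equivalences because (4a), (4b) transport equalities along
  equivalent prefixes. Under this dictionary the closure conditions (5)--(7) and the
  compatibilities (f) translate into each other.
\<close>

declare simr.simps [simp del]

lemma simr_length: "simr Ceq G G' \<Longrightarrow> length G = length G'"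
  by (subst (asm) simr.simps) (auto split: if_splits)

lemma simr_Nil [simp]: "simr Ceq [] G' \<longleftrightarrow> G' = []"
  by (simp add: simr.simps)

lemma simr_snoc: "simr Ceq (G @ [T]) (G' @ [T']) \<longleftrightarrow> simr Ceq G G' \<and> (G, T, T') \<in> Ceq"
  by (subst simr.simps) (auto dest: simr_length)

lemma simr_snocE:
  assumes "simr Ceq (G @ [T]) G''"
  obtains G' T' where "G'' = G' @ [T']" and "simr Ceq G G'" and "(G, T, T') \<in> Ceq"
proof -
  from simr_length[OF assms] obtain G' T' where "G'' = G' @ [T']"
    by (metis length_append_singleton Zero_not_Suc length_0_conv rev_exhaust)
  with assms that show thesis by (simp add: simr_snoc)
qed

lemma simr_append_snocE:
  assumes "simr Ceq (G @ D @ [X]) (G' @ D')" and "length G = length G'"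
  obtains D0 X' where "D' = D0 @ [X']" and "simr Ceq (G @ D) (G' @ D0)" and "(G @ D, X, X') \<in> Ceq"
proof -
  from simr_length[OF assms(1)] assms(2) obtain D0 X' where "D' = D0 @ [X']"
    by (metis length_append_singleton length_append add_left_cancel Zero_not_Suc length_0_conv rev_exhaust)
  with assms(1) that show thesis by (simp add: simr_snoc flip: append_assoc)
qed

lemma in_sim_of [simp]: "(G, G') \<in> sim_of C Ceq \<longleftrightarrow> G \<in> C \<and> G' \<in> C \<and> simr Ceq G G'"
  by (simp add: sim_of_def)

lemma wk_seq_Nil [simp]: "wk_seq M n [] = []"
  by (simp add: wk_seq_def)

lemma length_wk_seq [simp]: "length (wk_seq M n D) = length D"
  by (simp add: wk_seq_def)

lemma wk_seq_snoc: "wk_seq M n (D @ [T]) = wk_seq M n D @ [wk_l M n (n + length D) T]"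
  by (simp add: wk_seq_def nth_append)

lemma sb_seq_Nil [simp]: "sb_seq M n s [] = []"
  by (simp add: sb_seq_def)

lemma length_sb_seq [simp]: "length (sb_seq M n s D) = length D"
  by (simp add: sb_seq_def)

lemma sb_seq_snoc: "sb_seq M n s (D @ [T]) = sb_seq M n s D @ [sb_l M n (Suc n + length D) s T]"
  by (simp add: sb_seq_def nth_append)

lemma sigma_snoc: "length F = length G \<Longrightarrow> sigma (G @ [T]) F = F @ [T]"
  by (simp add: sigma_def)

lemma tsigma_snoc: "length F = length G \<Longrightarrow> tsigma (G, T, t) (F @ [T']) = (F, T', t)"
  by (simp add: tsigma_def)

lemma Ob_snoc: "G @ [T] \<in> Ob M \<longleftrightarrow> G \<in> Ob M \<and> T \<in> LMs M (length G)"
  by (auto simp: Ob_def nth_append less_Suc_eq)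

definition Ceq_of :: "'l list set \<Rightarrow> ('l list \<times> 'l list) set \<Rightarrow> ('l list \<times> 'l \<times> 'l) set" where
  "Ceq_of C sim = {(G, T, T'). G @ [T] \<in> C \<and> G @ [T'] \<in> C \<and> (G @ [T], G @ [T']) \<in> sim}"

definition Ceqt_of :: "('l list \<times> 'l \<times> 'r) set \<Rightarrow> (('l list \<times> 'l \<times> 'r) \<times> ('l list \<times> 'l \<times> 'r)) set
    \<Rightarrow> ('l list \<times> 'l \<times> 'r \<times> 'r) set" where
  "Ceqt_of Ct simeq =
     {(G, T, o1, o2). (G, T, o1) \<in> Ct \<and> (G, T, o2) \<in> Ct \<and> ((G, T, o1), (G, T, o2)) \<in> simeq}"

lemma unassign_eq: "unassign C Ct (sim, simeq) = (Ceq_of C sim, Ceqt_of Ct simeq)"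
  by (simp add: unassign_def Ceq_of_def Ceqt_of_def)

lemma Ceq_of_subset_EqAmb: "C \<subseteq> Ob M \<Longrightarrow> Ceq_of C sim \<subseteq> EqAmb M"
  by (auto simp: Ceq_of_def EqAmb_def Ob_snoc)

lemma Ceqt_of_subset_EqtAmb: "Ct \<subseteq> ObT M \<Longrightarrow> Ceqt_of Ct simeq \<subseteq> EqtAmb M"
  by (fastforce simp: Ceqt_of_def EqtAmb_def ObT_def Ob_snoc)

locale cc_system =
  fixes M :: "('r, 'l) mdata" and C :: "'l list set" and Ct :: "('l list \<times> 'l \<times> 'r) set"
  assumes Nil_in_C: "[] \<in> C"
    and butlast_in_C: "G @ [T] \<in> C \<Longrightarrow> G \<in> C"
    and bd_in_C: "(G, R, r) \<in> Ct \<Longrightarrow> G @ [R] \<in> C"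
    and weaken_in_Ct:
      "G @ [T] \<in> C \<Longrightarrow> (G @ D, R, r) \<in> Ct \<Longrightarrow>
       (G @ [T] @ wk_seq M (length G) D, wk_l M (length G) (length G + length D) R,
        wk_r M (length G) (length G + length D) r) \<in> Ct"
    and subst_in_Ct:
      "(G, S, s) \<in> Ct \<Longrightarrow> (G @ [S] @ D, R, r) \<in> Ct \<Longrightarrow>
       (G @ sb_seq M (length G) s D, sb_l M (length G) (Suc (length G) + length D) s R,
        sb_r M (length G) (Suc (length G) + length D) s r) \<in> Ct"
    and var_in_Ct:
      "G @ [T] \<in> C \<Longrightarrow>
       (G @ [T], wk_l M (length G) (length G) T, eta M (Suc (length G)) (Suc (length G))) \<in> Ct"

lemma cc_systemI: "conds1 M C Ct \<Longrightarrow> cc_system M C Ct"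
  unfolding conds1_def cc_system_def by (elim conjE) (intro conjI; assumption)

context cc_system
begin

text \<open>A context is weakened or substituted through the variable judgement over its last type.\<close>

lemma weaken_in_C:
  assumes "G @ [T] \<in> C" and "G @ D \<in> C"
  shows "G @ [T] @ wk_seq M (length G) D \<in> C"
proof (cases D rule: rev_cases)
  case Nil
  with assms show ?thesis by simp
next
  case (snoc D0 X)
  with var_in_Ct[of "G @ D0" X] assms(2) obtain R r where "(G @ D, R, r) \<in> Ct"
    by auto
  from bd_in_C[OF weaken_in_Ct[OF assms(1) this]] show ?thesis
    by (metis append_assoc butlast_in_C)
qed

lemma subst_in_C:
  assumes "(G, S, s) \<in> Ct" and "G @ [S] @ D \<in> C"
  shows "G @ sb_seq M (length G) s D \<in> C"
proof (cases D rule: rev_cases)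
  case Nil
  then show ?thesis using butlast_in_C[OF bd_in_C[OF assms(1)]] by simp
next
  case (snoc D0 X)
  with var_in_Ct[of "G @ [S] @ D0" X] assms(2) obtain R r where "(G @ [S] @ D, R, r) \<in> Ct"
    by auto
  from bd_in_C[OF subst_in_Ct[OF assms(1) this]] show ?thesis
    by (metis append_assoc butlast_in_C)
qed

lemma in_simeq_of:
  "((G, S, o1), (G', S', o2)) \<in> simeq_of C Ct Ceq Ceqt \<longleftrightarrow>
     (G, S, o1) \<in> Ct \<and> (G', S', o2) \<in> Ct \<and> simr Ceq (G @ [S]) (G' @ [S']) \<and> (G, S, o1, o2) \<in> Ceqt"
  by (auto simp: simeq_of_def bd_in_C)

end

locale cc_eq_system = cc_system +
  fixes Ceq :: "('l list \<times> 'l \<times> 'l) set" and Ceqt :: "('l list \<times> 'l \<times> 'r \<times> 'r) set"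
  assumes eq_ty_wf: "(G, T, T') \<in> Ceq \<Longrightarrow> G @ [T] \<in> C"
    and eq_ty_refl: "G @ [T] \<in> C \<Longrightarrow> (G, T, T) \<in> Ceq"
    and eq_ty_sym: "(G, T, T') \<in> Ceq \<Longrightarrow> (G, T', T) \<in> Ceq"
    and eq_ty_trans: "(G, T, T') \<in> Ceq \<Longrightarrow> (G, T', T'') \<in> Ceq \<Longrightarrow> (G, T, T'') \<in> Ceq"
    and eq_tm_wf: "(G, T, o1, o2) \<in> Ceqt \<Longrightarrow> (G, T, o1) \<in> Ct"
    and eq_tm_refl: "(G, T, o1) \<in> Ct \<Longrightarrow> (G, T, o1, o1) \<in> Ceqt"
    and eq_tm_sym: "(G, T, o1, o2) \<in> Ceqt \<Longrightarrow> (G, T, o2, o1) \<in> Ceqt"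
    and eq_tm_trans:
      "(G, T, o1, o2) \<in> Ceqt \<Longrightarrow> (G, T, o2, o3) \<in> Ceqt \<Longrightarrow> (G, T, o1, o3) \<in> Ceqt"
    and eq_ty_ctx_conv:
      "(G1, T, T') \<in> Ceq \<Longrightarrow> (G1 @ [T] @ G2, S, S') \<in> Ceq \<Longrightarrow> (G1 @ [T'] @ G2, S, S') \<in> Ceq"
    and eq_tm_ctx_conv:
      "(G1, T, T') \<in> Ceq \<Longrightarrow> (G1 @ [T] @ G2, S, o1, o2) \<in> Ceqt \<Longrightarrow> (G1 @ [T'] @ G2, S, o1, o2) \<in> Ceqt"
    and eq_tm_ty_conv:
      "(G, S, S') \<in> Ceq \<Longrightarrow> (G, S, o1, o2) \<in> Ceqt \<Longrightarrow> (G, S', o1, o2) \<in> Ceqt"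
    and eq_ty_weaken:
      "G1 @ [T] \<in> C \<Longrightarrow> (G1 @ G2, S, S') \<in> Ceq \<Longrightarrow>
       (G1 @ [T] @ wk_seq M (length G1) G2, wk_l M (length G1) (length G1 + length G2) S,
        wk_l M (length G1) (length G1 + length G2) S') \<in> Ceq"
    and eq_tm_weaken:
      "G1 @ [T] \<in> C \<Longrightarrow> (G1 @ G2, S, o1, o2) \<in> Ceqt \<Longrightarrow>
       (G1 @ [T] @ wk_seq M (length G1) G2, wk_l M (length G1) (length G1 + length G2) S,
        wk_r M (length G1) (length G1 + length G2) o1,
        wk_r M (length G1) (length G1 + length G2) o2) \<in> Ceqt"
    and eq_ty_subst:
      "(G1 @ [T] @ G2, S, S') \<in> Ceq \<Longrightarrow> (G1, T, r) \<in> Ct \<Longrightarrow>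
       (G1 @ sb_seq M (length G1) r G2, sb_l M (length G1) (Suc (length G1) + length G2) r S,
        sb_l M (length G1) (Suc (length G1) + length G2) r S') \<in> Ceq"
    and eq_tm_subst:
      "(G1 @ [T] @ G2, S, o1, o2) \<in> Ceqt \<Longrightarrow> (G1, T, r) \<in> Ct \<Longrightarrow>
       (G1 @ sb_seq M (length G1) r G2, sb_l M (length G1) (Suc (length G1) + length G2) r S,
        sb_r M (length G1) (Suc (length G1) + length G2) r o1,
        sb_r M (length G1) (Suc (length G1) + length G2) r o2) \<in> Ceqt"
    and eq_ty_subst_cong:
      "G1 @ [T] @ G2 @ [S] \<in> C \<Longrightarrow> (G1, T, r, r') \<in> Ceqt \<Longrightarrow>
       (G1 @ sb_seq M (length G1) r G2, sb_l M (length G1) (Suc (length G1) + length G2) r S,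
        sb_l M (length G1) (Suc (length G1) + length G2) r' S) \<in> Ceq"
    and eq_tm_subst_cong:
      "(G1 @ [T] @ G2, S, o1) \<in> Ct \<Longrightarrow> (G1, T, r, r') \<in> Ceqt \<Longrightarrow>
       (G1 @ sb_seq M (length G1) r G2, sb_l M (length G1) (Suc (length G1) + length G2) r S,
        sb_r M (length G1) (Suc (length G1) + length G2) r o1,
        sb_r M (length G1) (Suc (length G1) + length G2) r' o1) \<in> Ceqt"

lemma cc_eq_systemI: "cc_system M C Ct \<Longrightarrow> conds_eq M C Ct Ceq Ceqt \<Longrightarrow> cc_eq_system M C Ct Ceq Ceqt"
  unfolding conds_eq_def cc_eq_system_def cc_eq_system_axioms_def
  by (elim conjE) (intro conjI; assumption)

context cc_eq_system
begin

lemma simr_refl: "G \<in> C \<Longrightarrow> simr Ceq G G"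
  by (induction G rule: rev_induct) (auto simp: simr_snoc intro: butlast_in_C eq_ty_refl)

lemma eq_ty_transport: "simr Ceq G G' \<Longrightarrow> (G' @ D, S, S') \<in> Ceq \<Longrightarrow> (G @ D, S, S') \<in> Ceq"
proof (induction G arbitrary: G' D rule: rev_induct)
  case (snoc T G)
  from snoc.prems(1) obtain G0 T' where G': "G' = G0 @ [T']" and "simr Ceq G G0" "(G, T, T') \<in> Ceq"
    by (rule simr_snocE)
  moreover have "(G @ [T'] @ D, S, S') \<in> Ceq"
    using snoc.IH[OF \<open>simr Ceq G G0\<close>, of "[T'] @ D"] snoc.prems(2) G' by simp
  ultimately show ?case
    using eq_ty_ctx_conv[OF eq_ty_sym] by simp
qed simp

lemma eq_tm_transport: "simr Ceq G G' \<Longrightarrow> (G' @ D, S, o1, o2) \<in> Ceqt \<Longrightarrow> (G @ D, S, o1, o2) \<in> Ceqt"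
proof (induction G arbitrary: G' D rule: rev_induct)
  case (snoc T G)
  from snoc.prems(1) obtain G0 T' where G': "G' = G0 @ [T']" and "simr Ceq G G0" "(G, T, T') \<in> Ceq"
    by (rule simr_snocE)
  moreover have "(G @ [T'] @ D, S, o1, o2) \<in> Ceqt"
    using snoc.IH[OF \<open>simr Ceq G G0\<close>, of "[T'] @ D"] snoc.prems(2) G' by simp
  ultimately show ?case
    using eq_tm_ctx_conv[OF eq_ty_sym] by simp
qed simp

lemma simr_sym: "simr Ceq G G' \<Longrightarrow> simr Ceq G' G"
proof (induction G arbitrary: G' rule: rev_induct)
  case (snoc T G)
  from snoc.prems obtain G0 T' where G': "G' = G0 @ [T']" and "simr Ceq G G0" and "(G, T, T') \<in> Ceq"
    by (rule simr_snocE)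
  then have "simr Ceq G0 G" and "(G0, T', T) \<in> Ceq"
    using snoc.IH eq_ty_transport[of G0 G "[]"] eq_ty_sym by simp_all
  then show ?case by (simp add: G' simr_snoc)
qed simp

lemma simr_trans: "simr Ceq G G' \<Longrightarrow> simr Ceq G' G'' \<Longrightarrow> simr Ceq G G''"
proof (induction G arbitrary: G' G'' rule: rev_induct)
  case (snoc T G)
  from snoc.prems(1) obtain G0 T' where G': "G' = G0 @ [T']" and "simr Ceq G G0" and "(G, T, T') \<in> Ceq"
    by (rule simr_snocE)
  moreover from snoc.prems(2) obtain G1 T'' where G'': "G'' = G1 @ [T'']"
    and "simr Ceq G0 G1" and "(G0, T', T'') \<in> Ceq"
    unfolding G' by (rule simr_snocE)
  ultimately have "simr Ceq G G1" and "(G, T, T'') \<in> Ceq"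
    using snoc.IH eq_ty_transport[of G G0 "[]"] eq_ty_trans[of G T T'] by auto
  then show ?case by (simp add: G'' simr_snoc)
qed simp

lemma simr_wk_seq:
  assumes "G @ [T] \<in> C" and "simr Ceq (G @ [T]) (G' @ [T'])" and "simr Ceq (G @ D) (G' @ D')"
  shows "simr Ceq (G @ [T] @ wk_seq M (length G) D) (G' @ [T'] @ wk_seq M (length G') D')"
  using assms(3)
proof (induction D arbitrary: D' rule: rev_induct)
  case Nil
  then have "D' = []" using simr_length[OF Nil] simr_length[OF assms(2)] by simp
  with assms(2) show ?case by simp
next
  case (snoc X D)
  have len: "length G = length G'" using simr_length[OF assms(2)] by simp
  from snoc.prems len obtain D0 X' where D': "D' = D0 @ [X']" and ctx: "simr Ceq (G @ D) (G' @ D0)"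
    and X: "(G @ D, X, X') \<in> Ceq"
    by (auto elim: simr_append_snocE)
  have "length D = length D0" using simr_length[OF ctx] len by simp
  then have "simr Ceq ((G @ [T] @ wk_seq M (length G) D) @ [wk_l M (length G) (length G + length D) X])
      ((G' @ [T'] @ wk_seq M (length G') D0) @ [wk_l M (length G') (length G' + length D0) X'])"
    unfolding simr_snoc using snoc.IH[OF ctx] eq_ty_weaken[OF assms(1) X] len by simp
  then show ?case by (simp add: D' wk_seq_snoc)
qed

lemma simr_sb_seq:
  assumes "(G, S, s) \<in> Ct" and "(G, S, s, s') \<in> Ceqt" and "simr Ceq (G @ [S]) (G' @ [S'])"
    and "simr Ceq (G @ [S] @ D) (G' @ [S'] @ D')"
  shows "simr Ceq (G @ sb_seq M (length G) s D) (G' @ sb_seq M (length G') s' D')"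
  using assms(4)
proof (induction D arbitrary: D' rule: rev_induct)
  case Nil
  then have "D' = []" using simr_length[OF Nil] simr_length[OF assms(3)] by simp
  with assms(3) show ?case by (simp add: simr_snoc)
next
  case (snoc X D)
  have len: "length G = length G'" using simr_length[OF assms(3)] by simp
  from snoc.prems have "simr Ceq ((G @ [S]) @ D @ [X]) ((G' @ [S']) @ D')" by simp
  then obtain D0 X' where D': "D' = D0 @ [X']" and ctx: "simr Ceq (G @ [S] @ D) (G' @ [S'] @ D0)"
    and X: "(G @ [S] @ D, X, X') \<in> Ceq"
    by (rule simr_append_snocE) (use len in simp_all)
  have "length D = length D0" using simr_length[OF ctx] len by simp
  moreover have "G @ [S] @ D @ [X'] \<in> C"
    using eq_ty_wf[OF eq_ty_sym[OF X]] by simp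
  ultimately have "simr Ceq
      ((G @ sb_seq M (length G) s D) @ [sb_l M (length G) (Suc (length G) + length D) s X])
      ((G' @ sb_seq M (length G') s' D0) @ [sb_l M (length G') (Suc (length G') + length D0) s' X'])"
    unfolding simr_snoc using snoc.IH[OF ctx] len
      eq_ty_trans[OF eq_ty_subst[OF X assms(1)] eq_ty_subst_cong[OF _ assms(2)]]
    by simp
  then show ?case by (simp add: D' sb_seq_snoc)
qed

lemma equiv_sim_of: "equiv C (sim_of C Ceq)"
  by (rule equivI) (auto simp: sim_of_def refl_on_def sym_def trans_def
      intro: simr_refl simr_sym simr_trans)

lemma equiv_simeq_of: "equiv Ct (simeq_of C Ct Ceq Ceqt)"
proof (rule equivI)
  show "simeq_of C Ct Ceq Ceqt \<subseteq> Ct \<times> Ct"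
    by (auto simp: simeq_of_def)
  show "refl_on Ct (simeq_of C Ct Ceq Ceqt)"
    by (auto simp: refl_on_def in_simeq_of intro: simr_refl[OF bd_in_C] eq_tm_refl)
  show "sym (simeq_of C Ct Ceq Ceqt)"
  proof (rule symI, clarify)
    fix G S o1 G' S' o2
    assume "((G, S, o1), (G', S', o2)) \<in> simeq_of C Ct Ceq Ceqt"
    then have J: "(G, S, o1) \<in> Ct" "(G', S', o2) \<in> Ct" and ctx: "simr Ceq (G @ [S]) (G' @ [S'])"
      and eq: "(G, S, o1, o2) \<in> Ceqt"
      by (simp_all add: in_simeq_of)
    from ctx have "simr Ceq G' G" and "(G, S, S') \<in> Ceq"
      by (simp_all add: simr_snoc simr_sym)
    then have "(G', S', o2, o1) \<in> Ceqt"
      using eq_tm_transport[of G' G "[]"] eq_tm_ty_conv eq_tm_sym[OF eq] by simp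
    with J ctx show "((G', S', o2), (G, S, o1)) \<in> simeq_of C Ct Ceq Ceqt"
      by (simp add: in_simeq_of simr_sym)
  qed
  show "trans (simeq_of C Ct Ceq Ceqt)"
  proof (rule transI, clarify)
    fix G S o1 G' S' o2 G'' S'' o3
    assume "((G, S, o1), (G', S', o2)) \<in> simeq_of C Ct Ceq Ceqt"
      and "((G', S', o2), (G'', S'', o3)) \<in> simeq_of C Ct Ceq Ceqt"
    then have J: "(G, S, o1) \<in> Ct" "(G'', S'', o3) \<in> Ct"
      and ctx: "simr Ceq (G @ [S]) (G' @ [S'])" "simr Ceq (G' @ [S']) (G'' @ [S''])"
      and eq: "(G, S, o1, o2) \<in> Ceqt" "(G', S', o2, o3) \<in> Ceqt"
      by (simp_all add: in_simeq_of)
    from ctx(1) have "simr Ceq G G'" and "(G, S', S) \<in> Ceq"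
      by (simp_all add: simr_snoc eq_ty_sym)
    then have "(G, S, o2, o3) \<in> Ceqt"
      using eq_tm_transport[of G G' "[]"] eq_tm_ty_conv eq(2) by simp
    with J ctx eq(1) show "((G, S, o1), (G'', S'', o3)) \<in> simeq_of C Ct Ceq Ceqt"
      by (auto simp: in_simeq_of intro: simr_trans eq_tm_trans)
  qed
qed

lemma sim_of_butlast:
  assumes "(G, G') \<in> sim_of C Ceq"
  shows "(butlast G, butlast G') \<in> sim_of C Ceq"
proof (cases G rule: rev_cases)
  case Nil
  with assms show ?thesis by (simp add: Nil_in_C)
next
  case (snoc G0 T)
  with assms show ?thesis by (auto simp: simr_snoc intro: butlast_in_C elim!: simr_snocE)
qed

lemma simeq_of_retarget:
  assumes "(G, T, t) \<in> Ct" and "G' @ [T'] \<in> C" and "simr Ceq (G @ [T]) (G' @ [T'])"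
  shows "(G', T', t) \<in> Ct" and "((G, T, t), (G', T', t)) \<in> simeq_of C Ct Ceq Ceqt"
proof -
  from assms(3) have "simr Ceq G' G" and "(G, T, T') \<in> Ceq"
    by (simp_all add: simr_snoc simr_sym)
  then have "(G', T', t, t) \<in> Ceqt"
    using eq_tm_transport[of G' G "[]"] eq_tm_ty_conv eq_tm_refl[OF assms(1)] by simp
  then show "(G', T', t) \<in> Ct"
    by (rule eq_tm_wf)
  with assms show "((G, T, t), (G', T', t)) \<in> simeq_of C Ct Ceq Ceqt"
    by (simp add: in_simeq_of eq_tm_refl)
qed

lemma sim_of_weaken:
  assumes "G @ [T] \<in> C" and "G @ D \<in> C" and "G' @ [T'] \<in> C" and "G' @ D' \<in> C"
    and "(G @ [T], G' @ [T']) \<in> sim_of C Ceq" and "(G @ D, G' @ D') \<in> sim_of C Ceq"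
  shows "(G @ [T] @ wk_seq M (length G) D, G' @ [T'] @ wk_seq M (length G') D') \<in> sim_of C Ceq"
  using assms simr_wk_seq[OF assms(1)] weaken_in_C by simp

lemma simeq_of_weaken:
  assumes "G @ [T] \<in> C" and "(G @ D, R, r) \<in> Ct" and "G' @ [T'] \<in> C" and "(G' @ D', R', r') \<in> Ct"
    and "(G @ [T], G' @ [T']) \<in> sim_of C Ceq"
    and "((G @ D, R, r), (G' @ D', R', r')) \<in> simeq_of C Ct Ceq Ceqt"
  shows "((G @ [T] @ wk_seq M (length G) D, wk_l M (length G) (length G + length D) R,
           wk_r M (length G) (length G + length D) r),
          (G' @ [T'] @ wk_seq M (length G') D', wk_l M (length G') (length G' + length D') R',
           wk_r M (length G') (length G' + length D') r')) \<in> simeq_of C Ct Ceq Ceqt"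
proof -
  from assms(6) have ctx: "simr Ceq (G @ D @ [R]) (G' @ D' @ [R'])" and eq: "(G @ D, R, r, r') \<in> Ceqt"
    by (simp_all add: in_simeq_of)
  have "length G = length G'" "length D = length D'"
    using simr_length[OF ctx] assms(5) by (auto dest: simr_length)
  moreover have "simr Ceq (G @ [T] @ wk_seq M (length G) (D @ [R]))
      (G' @ [T'] @ wk_seq M (length G') (D' @ [R']))"
    using simr_wk_seq assms(1,5) ctx by simp
  ultimately show ?thesis
    using weaken_in_Ct[OF assms(1,2)] weaken_in_Ct[OF assms(3,4)] eq_tm_weaken[OF assms(1) eq]
    by (simp add: in_simeq_of wk_seq_snoc)
qed

lemma sim_of_subst:
  assumes "(G, S, s) \<in> Ct" and "G @ [S] @ D \<in> C" and "(G', S', s') \<in> Ct" and "G' @ [S'] @ D' \<in> C"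
    and "((G, S, s), (G', S', s')) \<in> simeq_of C Ct Ceq Ceqt"
    and "(G @ [S] @ D, G' @ [S'] @ D') \<in> sim_of C Ceq"
  shows "(G @ sb_seq M (length G) s D, G' @ sb_seq M (length G') s' D') \<in> sim_of C Ceq"
  using assms simr_sb_seq[OF assms(1)] subst_in_C by (auto simp: in_simeq_of)

lemma simeq_of_subst:
  assumes "(G, S, s) \<in> Ct" and "(G @ [S] @ D, R, r) \<in> Ct"
    and "(G', S', s') \<in> Ct" and "(G' @ [S'] @ D', R', r') \<in> Ct"
    and "((G, S, s), (G', S', s')) \<in> simeq_of C Ct Ceq Ceqt"
    and "((G @ [S] @ D, R, r), (G' @ [S'] @ D', R', r')) \<in> simeq_of C Ct Ceq Ceqt"
  shows "((G @ sb_seq M (length G) s D, sb_l M (length G) (Suc (length G) + length D) s R,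
           sb_r M (length G) (Suc (length G) + length D) s r),
          (G' @ sb_seq M (length G') s' D', sb_l M (length G') (Suc (length G') + length D') s' R',
           sb_r M (length G') (Suc (length G') + length D') s' r')) \<in> simeq_of C Ct Ceq Ceqt"
proof -
  from assms(5) have ctx_s: "simr Ceq (G @ [S]) (G' @ [S'])" and eq_s: "(G, S, s, s') \<in> Ceqt"
    by (simp_all add: in_simeq_of)
  from assms(6) have ctx: "simr Ceq (G @ [S] @ D @ [R]) (G' @ [S'] @ D' @ [R'])"
    and eq: "(G @ [S] @ D, R, r, r') \<in> Ceqt"
    by (simp_all add: in_simeq_of)
  have "length G = length G'" "length D = length D'"
    using simr_length[OF ctx] simr_length[OF ctx_s] by simp_all
  moreover have "simr Ceq (G @ sb_seq M (length G) s (D @ [R])) (G' @ sb_seq M (length G') s' (D' @ [R']))"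
    using simr_sb_seq[OF assms(1) eq_s ctx_s] ctx by simp
  moreover note subst_in_Ct[OF assms(1,2)] subst_in_Ct[OF assms(3,4)]
  moreover have "(G @ [S] @ D, R, r') \<in> Ct"
    using eq_tm_wf[OF eq_tm_sym[OF eq]] .
  note eq_tm_trans[OF eq_tm_subst[OF eq assms(1)] eq_tm_subst_cong[OF this eq_s]]
  ultimately show ?thesis
    by (simp add: in_simeq_of sb_seq_snoc)
qed

lemma simeq_of_var:
  assumes "G @ [T] \<in> C" and "G' @ [T'] \<in> C" and "(G @ [T], G' @ [T']) \<in> sim_of C Ceq"
  shows "((G @ [T], wk_l M (length G) (length G) T, eta M (Suc (length G)) (Suc (length G))),
          (G' @ [T'], wk_l M (length G') (length G') T', eta M (Suc (length G')) (Suc (length G'))))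
         \<in> simeq_of C Ct Ceq Ceqt"
proof -
  have "simr Ceq (G @ [T] @ wk_seq M (length G) [T]) (G' @ [T'] @ wk_seq M (length G') [T'])"
    using assms simr_wk_seq[OF assms(1)] by simp
  moreover have "length G = length G'"
    using assms(3) simr_length by fastforce
  ultimately show ?thesis
    using var_in_Ct[OF assms(1)] var_in_Ct[OF assms(2)] eq_tm_refl[OF var_in_Ct[OF assms(1)]]
    by (simp add: in_simeq_of wk_seq_def)
qed

lemma regular_congruence_assign:
  "regular_congruence M C Ct (sim_of C Ceq) (simeq_of C Ct Ceq Ceqt)"
  unfolding regular_congruence_def
proof (intro conjI allI impI)
  show "equiv C (sim_of C Ceq)" by (rule equiv_sim_of)
  show "equiv Ct (simeq_of C Ct Ceq Ceqt)" by (rule equiv_simeq_of)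
next
  fix G G' assume GG': "(G, G') \<in> sim_of C Ceq"
  then show "length G = length G'" by (auto dest: simr_length)
  from GG' show "(butlast G, butlast G') \<in> sim_of C Ceq" by (rule sim_of_butlast)
next
  fix J J' assume "(J, J') \<in> simeq_of C Ct Ceq Ceqt"
  then show "(bd J, bd J') \<in> sim_of C Ceq" by (auto simp: simeq_of_def bd_def)
next
  fix G T G' assume GT: "G @ [T] \<in> C" and "G' \<in> C" and "(G, G') \<in> sim_of C Ceq"
  then have "(G', T, T) \<in> Ceq"
    using eq_ty_transport[of G' G "[]"] eq_ty_refl simr_sym by simp
  with GT \<open>(G, G') \<in> sim_of C Ceq\<close> show "\<exists>T'. G' @ [T'] \<in> C \<and> (G @ [T], G' @ [T']) \<in> sim_of C Ceq"
    by (auto simp: simr_snoc intro: eq_ty_wf eq_ty_refl)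
next
  fix J F assume J: "J \<in> Ct" and "F \<in> C" and "(bd J, F) \<in> sim_of C Ceq"
  obtain G T t where [simp]: "J = (G, T, t)" by (cases J)
  from \<open>(bd J, F) \<in> sim_of C Ceq\<close> obtain F0 T' where F: "F = F0 @ [T']"
    and "simr Ceq (G @ [T]) (F0 @ [T'])"
    by (auto simp: bd_def simr_snoc elim!: simr_snocE)
  with J \<open>F \<in> C\<close> show "\<exists>J'. J' \<in> Ct \<and> bd J' = F \<and> (J, J') \<in> simeq_of C Ct Ceq Ceqt"
    using simeq_of_retarget[of G T t F0 T'] by (intro exI[of _ "(F0, T', t)"]) (simp add: bd_def)
qed (rule sim_of_weaken simeq_of_weaken sim_of_subst simeq_of_subst simeq_of_var; assumption)+

lemma sigma_conds_assign: "sigma_conds C Ct (sim_of C Ceq) (simeq_of C Ct Ceq Ceqt)"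
  unfolding sigma_conds_def
proof (intro conjI allI impI)
  fix G F assume "G \<in> C" and "G \<noteq> []" and "F \<in> C" and "(butlast G, F) \<in> sim_of C Ceq"
  moreover from \<open>G \<noteq> []\<close> obtain G0 T where G: "G = G0 @ [T]" by (cases G rule: rev_cases) simp
  ultimately have "simr Ceq G0 F" and "(G0, T, T) \<in> Ceq" and "(F, T, T) \<in> Ceq"
    using eq_ty_refl eq_ty_transport[of F G0 "[]"] simr_sym by simp_all
  with \<open>G \<in> C\<close> show "(G, sigma G F) \<in> sim_of C Ceq"
    by (simp add: G sigma_snoc simr_length simr_snoc eq_ty_wf)
next
  fix J F assume J: "J \<in> Ct" and "F \<in> C" and "(bd J, F) \<in> sim_of C Ceq"
  obtain G T t where [simp]: "J = (G, T, t)" by (cases J)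
  from \<open>(bd J, F) \<in> sim_of C Ceq\<close> obtain F0 T' where F: "F = F0 @ [T']"
    and "simr Ceq (G @ [T]) (F0 @ [T'])"
    by (auto simp: bd_def simr_snoc elim!: simr_snocE)
  moreover have "length F0 = length G"
    using simr_length[OF \<open>simr Ceq (G @ [T]) (F0 @ [T'])\<close>] by simp
  ultimately show "(J, tsigma J F) \<in> simeq_of C Ct Ceq Ceqt"
    using J \<open>F \<in> C\<close> simeq_of_retarget[of G T t F0 T'] by (simp add: tsigma_snoc)
qed

lemma unassign_assign: "unassign C Ct (assign C Ct (Ceq, Ceqt)) = (Ceq, Ceqt)"
proof -
  have "Ceq_of C (sim_of C Ceq) = Ceq"
    by (auto simp: Ceq_of_def simr_snoc intro: simr_refl butlast_in_C eq_ty_wf eq_ty_sym)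
  moreover have "Ceqt_of Ct (simeq_of C Ct Ceq Ceqt) = Ceqt"
    by (auto simp: Ceqt_of_def in_simeq_of simr_snoc
        intro: simr_refl butlast_in_C bd_in_C eq_ty_refl eq_tm_wf eq_tm_sym)
  ultimately show ?thesis by (simp add: assign_def unassign_eq)
qed

end

text \<open>Only (a)--(c), compatibility with \<open>T, ~T, S, ~S\<close>, and (ii), (iii) are needed here.\<close>

locale cc_congruence = cc_system +
  fixes sim :: "('l list \<times> 'l list) set"
    and simeq :: "(('l list \<times> 'l \<times> 'r) \<times> ('l list \<times> 'l \<times> 'r)) set"
  assumes equiv_sim: "equiv C sim"
    and equiv_simeq: "equiv Ct simeq"
    and sim_length: "(G, G') \<in> sim \<Longrightarrow> length G = length G'"
    and sim_butlast: "(G, G') \<in> sim \<Longrightarrow> (butlast G, butlast G') \<in> sim"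
    and simeq_bd: "(J, J') \<in> simeq \<Longrightarrow> (bd J, bd J') \<in> sim"
    and sim_weaken:
      "G @ [T] \<in> C \<Longrightarrow> G @ D \<in> C \<Longrightarrow> G' @ [T'] \<in> C \<Longrightarrow> G' @ D' \<in> C \<Longrightarrow>
       (G @ [T], G' @ [T']) \<in> sim \<Longrightarrow> (G @ D, G' @ D') \<in> sim \<Longrightarrow>
       (G @ [T] @ wk_seq M (length G) D, G' @ [T'] @ wk_seq M (length G') D') \<in> sim"
    and simeq_weaken:
      "G @ [T] \<in> C \<Longrightarrow> (G @ D, R, r) \<in> Ct \<Longrightarrow> G' @ [T'] \<in> C \<Longrightarrow> (G' @ D', R', r') \<in> Ct \<Longrightarrow>
       (G @ [T], G' @ [T']) \<in> sim \<Longrightarrow> ((G @ D, R, r), (G' @ D', R', r')) \<in> simeq \<Longrightarrow>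
       ((G @ [T] @ wk_seq M (length G) D, wk_l M (length G) (length G + length D) R,
         wk_r M (length G) (length G + length D) r),
        (G' @ [T'] @ wk_seq M (length G') D', wk_l M (length G') (length G' + length D') R',
         wk_r M (length G') (length G' + length D') r')) \<in> simeq"
    and sim_subst:
      "(G, S, s) \<in> Ct \<Longrightarrow> G @ [S] @ D \<in> C \<Longrightarrow> (G', S', s') \<in> Ct \<Longrightarrow> G' @ [S'] @ D' \<in> C \<Longrightarrow>
       ((G, S, s), (G', S', s')) \<in> simeq \<Longrightarrow> (G @ [S] @ D, G' @ [S'] @ D') \<in> sim \<Longrightarrow>
       (G @ sb_seq M (length G) s D, G' @ sb_seq M (length G') s' D') \<in> sim"
    and simeq_subst:
      "(G, S, s) \<in> Ct \<Longrightarrow> (G @ [S] @ D, R, r) \<in> Ct \<Longrightarrow>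
       (G', S', s') \<in> Ct \<Longrightarrow> (G' @ [S'] @ D', R', r') \<in> Ct \<Longrightarrow>
       ((G, S, s), (G', S', s')) \<in> simeq \<Longrightarrow> ((G @ [S] @ D, R, r), (G' @ [S'] @ D', R', r')) \<in> simeq \<Longrightarrow>
       ((G @ sb_seq M (length G) s D, sb_l M (length G) (Suc (length G) + length D) s R,
         sb_r M (length G) (Suc (length G) + length D) s r),
        (G' @ sb_seq M (length G') s' D', sb_l M (length G') (Suc (length G') + length D') s' R',
         sb_r M (length G') (Suc (length G') + length D') s' r')) \<in> simeq"
    and sim_sigma: "G \<in> C \<Longrightarrow> G \<noteq> [] \<Longrightarrow> F \<in> C \<Longrightarrow> (butlast G, F) \<in> sim \<Longrightarrow> (G, sigma G F) \<in> sim"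
    and simeq_tsigma: "J \<in> Ct \<Longrightarrow> F \<in> C \<Longrightarrow> (bd J, F) \<in> sim \<Longrightarrow> (J, tsigma J F) \<in> simeq"

lemma cc_congruenceI:
  assumes "cc_system M C Ct" and "regular_congruence M C Ct sim simeq" and "sigma_conds C Ct sim simeq"
  shows "cc_congruence M C Ct sim simeq"
  using assms unfolding cc_congruence_def cc_congruence_axioms_def
    regular_congruence_def sigma_conds_def
  by (elim conjE) (intro conjI; (assumption | blast))

context cc_congruence
begin

lemma sim_in_C: "(G, G') \<in> sim \<Longrightarrow> G \<in> C \<and> G' \<in> C"
  using equiv_type[OF equiv_sim] by blast

lemma sim_refl: "G \<in> C \<Longrightarrow> (G, G) \<in> sim"
  using equiv_sim by (meson equiv_def refl_onD)

lemma sim_sym: "(G, G') \<in> sim \<Longrightarrow> (G', G) \<in> sim"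
  using equiv_sim by (meson equiv_def symD)

lemma sim_trans: "(G, G') \<in> sim \<Longrightarrow> (G', G'') \<in> sim \<Longrightarrow> (G, G'') \<in> sim"
  using equiv_sim by (meson equiv_def transD)

lemma simeq_in_Ct: "(J, J') \<in> simeq \<Longrightarrow> J \<in> Ct \<and> J' \<in> Ct"
  using equiv_type[OF equiv_simeq] by blast

lemma simeq_refl: "J \<in> Ct \<Longrightarrow> (J, J) \<in> simeq"
  using equiv_simeq by (meson equiv_def refl_onD)

lemma simeq_sym: "(J, J') \<in> simeq \<Longrightarrow> (J', J) \<in> simeq"
  using equiv_simeq by (meson equiv_def symD)

lemma simeq_trans: "(J, J') \<in> simeq \<Longrightarrow> (J', J'') \<in> simeq \<Longrightarrow> (J, J'') \<in> simeq"
  using equiv_simeq by (meson equiv_def transD)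

lemma in_Ceq_of [simp]: "(G, T, T') \<in> Ceq_of C sim \<longleftrightarrow> (G @ [T], G @ [T']) \<in> sim"
  by (auto simp: Ceq_of_def dest: sim_in_C)

lemma in_Ceqt_of [simp]: "(G, T, o1, o2) \<in> Ceqt_of Ct simeq \<longleftrightarrow> ((G, T, o1), (G, T, o2)) \<in> simeq"
  by (auto simp: Ceqt_of_def dest: simeq_in_Ct)

lemma sim_append: "(G, G') \<in> sim \<Longrightarrow> G @ D \<in> C \<Longrightarrow> (G @ D, G' @ D) \<in> sim"
proof (induction D rule: rev_induct)
  case (snoc T D)
  then have "(G @ D, G' @ D) \<in> sim"
    using butlast_in_C[of "G @ D" T] by simp
  with snoc.prems show ?case
    using sim_sigma[of "G @ D @ [T]" "G' @ D"] sim_in_C sim_length[OF snoc.prems(1)]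
    by (simp add: sigma_snoc flip: append_assoc)
qed simp

lemma sim_snoc_iff: "(G @ [T], G' @ [T']) \<in> sim \<longleftrightarrow> (G, G') \<in> sim \<and> (G @ [T], G @ [T']) \<in> sim"
proof
  assume sim: "(G @ [T], G' @ [T']) \<in> sim"
  then have "(G, G') \<in> sim"
    using sim_butlast by fastforce
  moreover from this have "(G' @ [T'], G @ [T']) \<in> sim"
    using sim_append[OF sim_sym] sim_in_C[OF sim] by simp
  ultimately show "(G, G') \<in> sim \<and> (G @ [T], G @ [T']) \<in> sim"
    using sim_trans[OF sim] by blast
next
  assume "(G, G') \<in> sim \<and> (G @ [T], G @ [T']) \<in> sim"
  then have ctx: "(G, G') \<in> sim" and fibre: "(G @ [T], G @ [T']) \<in> sim" by simp_all
  have "(G @ [T'], G' @ [T']) \<in> sim"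
    using sim_append[OF ctx] sim_in_C[OF fibre] by simp
  with fibre show "(G @ [T], G' @ [T']) \<in> sim" by (rule sim_trans)
qed

lemma sim_snoc_fibre: "(G @ [T], G' @ [T']) \<in> sim \<Longrightarrow> (G @ [T], G @ [T']) \<in> sim"
  using sim_snoc_iff by blast

lemma simr_Ceq_of: "simr (Ceq_of C sim) G G' \<longleftrightarrow> (G, G') \<in> sim"
proof (induction G arbitrary: G' rule: rev_induct)
  case Nil
  show ?case using Nil_in_C sim_refl sim_length by fastforce
next
  case (snoc T G)
  show ?case
  proof (cases G' rule: rev_cases)
    case Nil
    then show ?thesis using sim_length simr_length by fastforce
  next
    case (snoc G0 T')
    then show ?thesis using sim_snoc_iff[of G T G0 T'] by (simp add: simr_snoc snoc.IH)
  qed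
qed

lemma simeq_retarget: "(G, S, o1) \<in> Ct \<Longrightarrow> (G @ [S], G' @ [S']) \<in> sim \<Longrightarrow> ((G, S, o1), (G', S', o1)) \<in> simeq"
  using simeq_tsigma[of "(G, S, o1)" "G' @ [S']"] sim_in_C sim_length
  by (fastforce simp: bd_def tsigma_snoc)

lemma simeq_iff_fibre:
  "((G, S, o1), (G', S', o2)) \<in> simeq \<longleftrightarrow>
     (G @ [S], G' @ [S']) \<in> sim \<and> ((G, S, o1), (G, S, o2)) \<in> simeq"
proof
  assume eq: "((G, S, o1), (G', S', o2)) \<in> simeq"
  then have sim: "(G @ [S], G' @ [S']) \<in> sim"
    using simeq_bd by (fastforce simp: bd_def)
  have "((G', S', o2), (G, S, o2)) \<in> simeq"
    using simeq_retarget[OF _ sim_sym[OF sim]] simeq_in_Ct[OF eq] by simp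
  with sim show "(G @ [S], G' @ [S']) \<in> sim \<and> ((G, S, o1), (G, S, o2)) \<in> simeq"
    using simeq_trans[OF eq] by simp
next
  assume "(G @ [S], G' @ [S']) \<in> sim \<and> ((G, S, o1), (G, S, o2)) \<in> simeq"
  then have sim: "(G @ [S], G' @ [S']) \<in> sim" and fibre: "((G, S, o1), (G, S, o2)) \<in> simeq"
    by simp_all
  have "((G, S, o2), (G', S', o2)) \<in> simeq"
    using simeq_retarget[OF _ sim] simeq_in_Ct[OF fibre] by simp
  with fibre show "((G, S, o1), (G', S', o2)) \<in> simeq" by (rule simeq_trans)
qed

lemma simeq_fibre: "((G, S, o1), (G', S', o2)) \<in> simeq \<Longrightarrow> ((G, S, o1), (G, S, o2)) \<in> simeq"
  using simeq_iff_fibre by blast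

lemma assign_unassign: "assign C Ct (unassign C Ct (sim, simeq)) = (sim, simeq)"
proof -
  have "sim_of C (Ceq_of C sim) = sim"
    by (auto simp: sim_of_def simr_Ceq_of dest: sim_in_C)
  moreover have "x \<in> simeq_of C Ct (Ceq_of C sim) (Ceqt_of Ct simeq) \<longleftrightarrow> x \<in> simeq" for x
  proof -
    obtain G S o1 G' S' o2 where x: "x = ((G, S, o1), (G', S', o2))"
      by (cases x) auto
    show ?thesis
      using simeq_iff_fibre[of G S o1 G' S' o2] simeq_in_Ct[of "(G, S, o1)" "(G', S', o2)"]
      by (auto simp: x in_simeq_of simr_Ceq_of)
  qed
  ultimately show ?thesis
    by (auto simp: assign_def unassign_eq)
qed

lemma sim_fibre_transport:
  assumes "(G, G') \<in> sim" and "(G @ [S], G @ [S']) \<in> sim"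
  shows "(G' @ [S], G' @ [S']) \<in> sim"
proof -
  have "(G @ [S], G' @ [S]) \<in> sim" and "(G @ [S'], G' @ [S']) \<in> sim"
    using sim_append[OF assms(1)] sim_in_C[OF assms(2)] by simp_all
  with assms(2) show ?thesis by (meson sim_sym sim_trans)
qed

lemma simeq_fibre_transport:
  assumes "(G @ [S], G' @ [S']) \<in> sim" and "((G, S, o1), (G, S, o2)) \<in> simeq"
  shows "((G', S', o1), (G', S', o2)) \<in> simeq"
proof -
  have "((G, S, o1), (G', S', o1)) \<in> simeq" and "((G, S, o2), (G', S', o2)) \<in> simeq"
    using simeq_retarget[OF _ assms(1)] simeq_in_Ct[OF assms(2)] by simp_all
  with assms(2) show ?thesis by (meson simeq_sym simeq_trans)
qed

lemma conds_eq_unassign: "conds_eq M C Ct (Ceq_of C sim) (Ceqt_of Ct simeq)"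
  unfolding conds_eq_def in_Ceq_of in_Ceqt_of
  apply (intro conjI allI impI)
  subgoal using sim_in_C by blast
  subgoal by (rule sim_refl)
  subgoal by (rule sim_sym)
  subgoal by (rule sim_trans)
  subgoal using simeq_in_Ct by blast
  subgoal by (rule simeq_refl)
  subgoal by (rule simeq_sym)
  subgoal by (rule simeq_trans)
  subgoal for G1 T T' G2 S S'
    using sim_fibre_transport[OF sim_append[of "G1 @ [T]" "G1 @ [T']" G2]]
      sim_in_C[of "(G1 @ [T] @ G2) @ [S]"] butlast_in_C[of "G1 @ [T] @ G2" S]
    by simp
  subgoal for G1 T T' G2 S o1 o2
    using simeq_fibre_transport sim_append[of "G1 @ [T]" "G1 @ [T']" "G2 @ [S]"]
      bd_in_C simeq_in_Ct
    by (metis append_assoc)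
  subgoal using simeq_fibre_transport by blast
  subgoal for G1 T G2 S S'
    using sim_weaken[of G1 T "G2 @ [S]" G1 T "G2 @ [S']"] sim_refl sim_in_C
    by (simp add: wk_seq_snoc)
  subgoal for G1 T G2 S o1 o2
    using simeq_weaken[of G1 T G2 S o1 G1 T G2 S o2] sim_refl simeq_in_Ct
    by simp
  subgoal for G1 T G2 S S' r
    using sim_subst[of G1 T r "G2 @ [S]" G1 T r "G2 @ [S']"] simeq_refl sim_in_C
    by (simp add: sb_seq_snoc)
  subgoal for G1 T G2 S o1 o2 r
    using simeq_subst[of G1 T r G2 S o1 G1 T r G2 S o2] simeq_refl simeq_in_Ct
    by simp
  subgoal for G1 T G2 S r r'
    using sim_subst[of G1 T r "G2 @ [S]" G1 T r' "G2 @ [S]"] sim_refl simeq_in_Ct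
    by (intro sim_snoc_fibre[where G' = "G1 @ sb_seq M (length G1) r' G2"]) (simp add: sb_seq_snoc)
  subgoal for G1 T G2 S o1 r r'
    using simeq_subst[of G1 T r G2 S o1 G1 T r' G2 S o1] simeq_refl simeq_in_Ct
    by (intro simeq_fibre[where G' = "G1 @ sb_seq M (length G1) r' G2"]) simp
  done

end

theorem proposition6p11:
  fixes M :: "('r, 'l) mdata"
    and C :: "'l list set"
    and Ct :: "('l list \<times> 'l \<times> 'r) set"
  assumes "monad_module M"
    and "C \<subseteq> Ob M"
    and "Ct \<subseteq> ObT M"
    and "conds1 M C Ct"
  defines "Dom \<equiv> {(Ceq, Ceqt). Ceq \<subseteq> EqAmb M \<and> Ceqt \<subseteq> EqtAmb M \<and> conds_eq M C Ct Ceq Ceqt}"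
    and "Cod \<equiv> {(sim, simeq). regular_congruence M C Ct sim simeq \<and> sigma_conds C Ct sim simeq}"
  shows "bij_betw (assign C Ct) Dom Cod
    \<and> (\<forall>p\<in>Dom. unassign C Ct (assign C Ct p) = p)
    \<and> (\<forall>q\<in>Cod. unassign C Ct q \<in> Dom \<and> assign C Ct (unassign C Ct q) = q)"
proof -
  have sys: "cc_system M C Ct"
    using assms(4) by (rule cc_systemI)
  have forward: "assign C Ct p \<in> Cod \<and> unassign C Ct (assign C Ct p) = p" if "p \<in> Dom" for p
  proof -
    from that obtain Ceq Ceqt where p: "p = (Ceq, Ceqt)" and "conds_eq M C Ct Ceq Ceqt"
      by (auto simp: Dom_def)
    with sys interpret cc_eq_system M C Ct Ceq Ceqt
      by (intro cc_eq_systemI)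
    show ?thesis
      using regular_congruence_assign sigma_conds_assign unassign_assign
      by (simp add: p Cod_def assign_def)
  qed
  have backward: "unassign C Ct q \<in> Dom \<and> assign C Ct (unassign C Ct q) = q" if "q \<in> Cod" for q
  proof -
    from that obtain sim simeq where q: "q = (sim, simeq)"
      and "regular_congruence M C Ct sim simeq" and "sigma_conds C Ct sim simeq"
      by (auto simp: Cod_def)
    with sys interpret cc_congruence M C Ct sim simeq
      by (intro cc_congruenceI)
    show ?thesis
      using conds_eq_unassign assign_unassign Ceq_of_subset_EqAmb[OF assms(2)]
        Ceqt_of_subset_EqtAmb[OF assms(3)]
      by (simp add: q Dom_def unassign_eq)
  qed
  have "bij_betw (assign C Ct) Dom Cod"
    using forward backward by (intro bij_betw_byWitness[where f' = "unassign C Ct"]) auto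
  with forward backward show ?thesis
    by blast
qed

end
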